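(* Let $\sigma\in S_K$ be a permutation pattern whose length is at most one less than the length of the longest element of $S_K$, i.e. $\operatorname{len}(\sigma)\ge\binom{K}{2}-1$. Then $\sigma$ admits a bountiful width system.
   Context: $\operatorname{len}(\sigma)$ is the Coxeter length (number of inversions) of $\sigma$; the longest element of $S_K$ has length $\binom K2$. For $x=[x_1,\dots,x_N]\in S_N$ and $\tau\in S_k$, an instance of $\tau$ in $x$ is a tuple of positions $P=(P_1<\dots<P_k)$ with $(x_{P_1},\dots,x_{P_k})$ in the same relative order as $\tau$. A width system for $\tau$ is a finite sequence of pairs $(a_1,b_1),\dots,(a_m,b_m)$ with $1\le a_l<b_l\le k$, assigning to each instance $P$ the tuple $w(P)=(P_{b_1}-P_{a_1},\dots,P_{b_m}-P_{a_m})$. An instance is minimal in $x$ if $w(P)$ is lexicographically minimal among all instances of $\tau$ in $x$, and locally minimal if it is a minimal instance of $\tau$ in the consecutive segment $[x_{P_1},x_{P_1+1},\dots,x_{P_k}]$. The width system is bountiful if for every $x\in S_N$ (any $N$), every locally minimal instance $P$ and every position $t$ with $P_1<t<P_k$, $t\notin\{P_1,\dots,P_k\}$, either $x_t<x_{P_j}$ for all $j$ with $P_j<t$, or $x_t>x_{P_j}$ for all $j$ with $P_j>t$. $\tau$ admits a bountiful width system if some width system for $\tau$ is bountiful. *)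

theory Defs
  imports Main
begin

text \<open>Permutations are lists of values; positions are 0-indexed (only differences of
positions and their relative order matter, so this is harmless).\<close>

definition is_perm :: "nat \<Rightarrow> nat list \<Rightarrow> bool" where
  "is_perm N x \<longleftrightarrow> length x = N \<and> distinct x \<and> set x = {1..N}"

definition perm_len :: "nat list \<Rightarrow> nat" where
  "perm_len s = card {(i, j). i < j \<and> j < length s \<and> s ! i > s ! j}"

definition is_instance :: "nat list \<Rightarrow> nat list \<Rightarrow> nat list \<Rightarrow> bool" where
  "is_instance tau x P \<longleftrightarrow>
     length P = length tau \<and> sorted_wrt (<) P \<and> (\<forall>p\<in>set P. p < length x) \<and>
     (\<forall>i<length tau. \<forall>j<length tau. (x ! (P ! i) < x ! (P ! j)) \<longleftrightarrow> (tau ! i < tau ! j))"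

definition is_width_system :: "nat list \<Rightarrow> (nat \<times> nat) list \<Rightarrow> bool" where
  "is_width_system tau ws \<longleftrightarrow> (\<forall>(a, b)\<in>set ws. a < b \<and> b < length tau)"

definition width :: "(nat \<times> nat) list \<Rightarrow> nat list \<Rightarrow> nat list" where
  "width ws P = map (\<lambda>(a, b). P ! b - P ! a) ws"

definition is_minimal :: "nat list \<Rightarrow> (nat \<times> nat) list \<Rightarrow> nat list \<Rightarrow> nat list \<Rightarrow> bool" where
  "is_minimal tau ws x P \<longleftrightarrow> is_instance tau x P \<and>
     (\<forall>Q. is_instance tau x Q \<longrightarrow> (width ws Q, width ws P) \<notin> lexord {(a, b). a < b})"

definition segment :: "nat list \<Rightarrow> nat list \<Rightarrow> nat list" where
  "segment x P = drop (hd P) (take (last P + 1) x)"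

definition is_locally_minimal :: "nat list \<Rightarrow> (nat \<times> nat) list \<Rightarrow> nat list \<Rightarrow> nat list \<Rightarrow> bool" where
  "is_locally_minimal tau ws x P \<longleftrightarrow> is_instance tau x P \<and>
     (P = [] \<or> is_minimal tau ws (segment x P) (map (\<lambda>p. p - hd P) P))"

definition bountiful :: "nat list \<Rightarrow> (nat \<times> nat) list \<Rightarrow> bool" where
  "bountiful tau ws \<longleftrightarrow>
     (\<forall>N x P t. is_perm N x \<longrightarrow> is_locally_minimal tau ws x P \<longrightarrow>
        (\<exists>i<length P. P ! i < t) \<longrightarrow> (\<exists>j<length P. t < P ! j) \<longrightarrow> t \<notin> set P \<longrightarrow>
        (\<forall>j<length P. P ! j < t \<longrightarrow> x ! t < x ! (P ! j)) \<or>
        (\<forall>j<length P. t < P ! j \<longrightarrow> x ! t > x ! (P ! j)))"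

definition admits_bountiful :: "nat list \<Rightarrow> bool" where
  "admits_bountiful tau \<longleftrightarrow> (\<exists>ws. is_width_system tau ws \<and> bountiful tau ws)"

end

theory Submission
  imports Defs
begin

text \<open>Every pair of positions of \<open>\<sigma>\<in>S\<^sub>K\<close> is either an inversion or an ascent
(a non-inversion), so \<open>len \<sigma> \<ge> K choose 2 - 1\<close> leaves at most one ascent. A position \<open>t\<close>
violating bountifulness for an instance \<open>P\<close> always lies, both in position and in value,
strictly between \<open>P j\<close> and \<open>P l\<close> for some ascent \<open>(j, l)\<close> of \<open>\<sigma>\<close>. With no ascent at all the
empty width system is therefore bountiful. With a single ascent \<open>(a, b)\<close> we get \<open>b = a + 1\<close>,
and every other entry of \<open>P\<close> is above \<open>P (a + 1)\<close> or below \<open>P a\<close> in value; so replacing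
\<open>P (a + 1)\<close> by \<open>t\<close> yields an instance in the same segment whose width \<open>t - P a\<close> is smaller,
contradicting local minimality for the width system \<open>[(a, a + 1)]\<close>.\<close>

definition ascents :: "nat list \<Rightarrow> (nat \<times> nat) set" where
  "ascents s = {(i, j). i < j \<and> j < length s \<and> s ! i < s ! j}"

lemma card_pairs_less: "card {(i, j). i < j \<and> j < (n::nat)} = n choose 2"
proof (induction n)
  case 0
  show ?case by simp
next
  case (Suc n)
  have split: "{(i, j). i < j \<and> j < Suc n} = {(i, j). i < j \<and> j < n} \<union> (\<lambda>i. (i, n)) ` {..<n}"
    by auto
  have "finite {(i, j). i < j \<and> j < (n::nat)}"
    by (rule finite_subset[of _ "{..<n} \<times> {..<n}"]) auto
  moreover have "card ((\<lambda>i. (i, n)) ` {..<n}) = n"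
    by (simp add: card_image inj_on_def)
  ultimately have "card {(i, j). i < j \<and> j < Suc n} = (n choose 2) + n"
    unfolding split using Suc.IH by (subst card_Un_disjoint) auto
  also have "\<dots> = Suc n choose 2"
    by (simp add: numeral_2_eq_2)
  finally show ?case .
qed

lemma card_ascents_add_perm_len:
  assumes "distinct s"
  shows "card (ascents s) + perm_len s = length s choose 2"
proof -
  define inv where "inv = {(i, j). i < j \<and> j < length s \<and> s ! j < s ! i}"
  have "s ! i \<noteq> s ! j" if "i < j" "j < length s" for i j
    using assms that by (simp add: nth_eq_iff_index_eq)
  then have "{(i, j). i < j \<and> j < length s} = ascents s \<union> inv"
    by (auto simp: ascents_def inv_def neq_iff)
  moreover have "finite {(i, j). i < j \<and> j < length s}"
    by (rule finite_subset[of _ "{..<length s} \<times> {..<length s}"]) auto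
  moreover have "ascents s \<inter> inv = {}"
    by (auto simp: ascents_def inv_def)
  ultimately have "length s choose 2 = card (ascents s) + card inv"
    by (metis card_pairs_less card_Un_disjoint finite_Un)
  then show ?thesis
    by (simp add: perm_len_def inv_def)
qed

lemma ascents_unique_if_perm_len_ge:
  assumes "distinct s" and "int (perm_len s) \<ge> int (length s choose 2) - 1"
    and "p \<in> ascents s" and "q \<in> ascents s"
  shows "p = q"
proof -
  have "int (card (ascents s)) + int (perm_len s) = int (length s choose 2)"
    using card_ascents_add_perm_len[OF assms(1)] by (metis of_nat_add)
  then have "card (ascents s) \<le> Suc 0"
    using assms(2) by linarith
  moreover have "finite (ascents s)"
    by (rule finite_subset[of _ "{..<length s} \<times> {..<length s}"]) (auto simp: ascents_def)
  ultimately show ?thesis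
    using assms(3,4) card_le_Suc0_iff_eq by blast
qed

lemma ascent_adjacent:
  assumes "distinct s" and "ascents s = {(a, b)}"
  shows "b = Suc a"
proof (rule ccontr)
  assume "b \<noteq> Suc a"
  moreover have ab: "a < b" "b < length s" "s ! a < s ! b"
    using assms(2) by (auto simp: ascents_def)
  ultimately have mid: "Suc a < b"
    by simp
  then have "(a, Suc a) \<notin> ascents s" "(Suc a, b) \<notin> ascents s"
    using assms(2) by auto
  then have "\<not> s ! a < s ! Suc a" and "\<not> s ! Suc a < s ! b"
    using mid ab(2) by (auto simp: ascents_def)
  moreover have "s ! a \<noteq> s ! Suc a" and "s ! Suc a \<noteq> s ! b"
    using assms(1) mid ab(2) by (auto simp: nth_eq_iff_index_eq)
  ultimately show False
    using ab(3) by auto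
qed

lemma unseparated_position_ascent:
  assumes "distinct x" and "is_instance tau x P" and "t \<notin> set P"
    and "j < length P" "P ! j < t" "\<not> x ! t < x ! (P ! j)"
    and "l < length P" "t < P ! l" "\<not> x ! (P ! l) < x ! t"
  shows "(j, l) \<in> ascents tau \<and> x ! (P ! j) < x ! t \<and> x ! t < x ! (P ! l)"
proof -
  have sorted: "sorted_wrt (<) P" and len: "length P = length tau"
    and bound: "\<forall>p\<in>set P. p < length x"
    and order: "\<forall>i<length tau. \<forall>j<length tau. x ! (P ! i) < x ! (P ! j) \<longleftrightarrow> tau ! i < tau ! j"
    using assms(2) by (auto simp: is_instance_def)
  have "\<not> l < j" "l \<noteq> j"
    using sorted_wrt_nth_less[OF sorted, of l j] assms(4,5,8) by auto
  then have "j < l"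
    by simp
  have "P ! j \<noteq> t" "P ! l \<noteq> t"
    using assms(3,4,7) by auto
  moreover have "P ! j < length x" and Pl: "P ! l < length x"
    using bound assms(4,7) by auto
  moreover have "t < length x"
    using assms(8) Pl by linarith
  ultimately have "x ! t \<noteq> x ! (P ! j)" "x ! t \<noteq> x ! (P ! l)"
    using assms(1) by (auto simp: nth_eq_iff_index_eq)
  then have between: "x ! (P ! j) < x ! t" "x ! t < x ! (P ! l)"
    using assms(6,9) by auto
  then have "x ! (P ! j) < x ! (P ! l)"
    by simp
  then have "tau ! j < tau ! l"
    using order assms(4,7) len by auto
  then show ?thesis
    using \<open>j < l\<close> assms(7) len between by (simp add: ascents_def)
qed

lemma is_instance_list_update:
  assumes "is_instance tau x P" and "i < length P" and "t < length x"
    and "\<And>k. k < i \<Longrightarrow> P ! k < t" and "\<And>k. i < k \<Longrightarrow> k < length P \<Longrightarrow> t < P ! k"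
    and "\<And>k. k < length P \<Longrightarrow> k \<noteq> i \<Longrightarrow>
           (x ! t < x ! (P ! k) \<longleftrightarrow> x ! (P ! i) < x ! (P ! k)) \<and>
           (x ! (P ! k) < x ! t \<longleftrightarrow> x ! (P ! k) < x ! (P ! i))"
  shows "is_instance tau x (P[i := t])"
proof -
  have sorted: "sorted_wrt (<) P" and len: "length P = length tau"
    and bound: "\<forall>p\<in>set P. p < length x"
    and order: "\<forall>j<length tau. \<forall>k<length tau. x ! (P ! j) < x ! (P ! k) \<longleftrightarrow> tau ! j < tau ! k"
    using assms(1) by (auto simp: is_instance_def)
  have "P[i := t] ! j < P[i := t] ! k" if "j < k" "k < length P" for j k
    using that sorted_wrt_nth_less[OF sorted, of j k] assms(2,4,5)
    by (cases "j = i"; cases "k = i") auto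
  then have "sorted_wrt (<) (P[i := t])"
    by (simp add: sorted_wrt_iff_nth_less)
  moreover have "\<forall>p\<in>set (P[i := t]). p < length x"
    using bound assms(3) set_update_subset_insert by fastforce
  moreover have "x ! (P[i := t] ! j) < x ! (P[i := t] ! k) \<longleftrightarrow> tau ! j < tau ! k"
    if "j < length tau" "k < length tau" for j k
  proof -
    have "x ! (P[i := t] ! j) < x ! (P[i := t] ! k) \<longleftrightarrow> x ! (P ! j) < x ! (P ! k)"
      using that assms(2) assms(6)[of j] assms(6)[of k] len by (cases "j = i"; cases "k = i") auto
    then show ?thesis
      using order that by auto
  qed
  ultimately show ?thesis
    using len by (simp add: is_instance_def)
qed

lemma width_map_minus:
  assumes "is_width_system tau ws" and "length P = length tau" and "\<forall>p\<in>set P. h \<le> p"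
  shows "width ws (map (\<lambda>p. p - h) P) = width ws P"
  using assms by (auto simp: width_def is_width_system_def)

lemma is_instance_segment:
  assumes "is_instance tau x Q" and "\<forall>q\<in>set Q. h \<le> q \<and> q \<le> L" and "L < length x"
  shows "is_instance tau (drop h (take (Suc L) x)) (map (\<lambda>q. q - h) Q)"
proof -
  have nth: "drop h (take (Suc L) x) ! (q - h) = x ! q" if "q \<in> set Q" for q
    using assms(2,3) that by auto
  have bound: "q - h < length (drop h (take (Suc L) x))" if "q \<in> set Q" for q
    using assms(2,3) that by fastforce
  have "sorted_wrt (<) Q"
    using assms(1) by (simp add: is_instance_def)
  then have sorted: "sorted_wrt (\<lambda>p q. p - h < q - h) Q"
    by (rule sorted_wrt_mono_rel[rotated]) (use assms(2) in fastforce)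
  show ?thesis
    unfolding is_instance_def sorted_wrt_map
    using assms(1) nth bound sorted nth_mem[of _ Q] by (auto simp: is_instance_def)
qed

lemma sorted_hd_le_last:
  assumes "sorted xs" and "y \<in> set xs"
  shows "hd xs \<le> y \<and> y \<le> last xs"
proof -
  obtain i where i: "i < length xs" "y = xs ! i"
    using assms(2) by (auto simp: in_set_conv_nth)
  then have "xs ! 0 \<le> xs ! i" "xs ! i \<le> xs ! (length xs - 1)"
    using assms(1) by (auto intro: sorted_nth_mono)
  moreover have "xs \<noteq> []"
    using assms(2) by auto
  ultimately show ?thesis
    using i by (simp add: hd_conv_nth last_conv_nth)
qed

lemma locally_minimal_width_le:
  assumes "is_width_system tau ws" and "is_locally_minimal tau ws x P" and "P \<noteq> []"
    and "is_instance tau x Q" and "\<forall>q\<in>set Q. hd P \<le> q \<and> q \<le> last P"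
  shows "(width ws Q, width ws P) \<notin> lexord {(a, b). a < b}"
proof -
  have P: "is_instance tau x P"
    and min: "is_minimal tau ws (segment x P) (map (\<lambda>p. p - hd P) P)"
    using assms(2,3) by (auto simp: is_locally_minimal_def)
  have "last P < length x"
    using P assms(3) by (simp add: is_instance_def)
  then have "is_instance tau (segment x P) (map (\<lambda>q. q - hd P) Q)"
    using is_instance_segment[OF assms(4,5)] by (simp add: segment_def)
  moreover have "width ws (map (\<lambda>q. q - hd P) Q) = width ws Q"
    using assms(1,4,5) by (intro width_map_minus) (auto simp: is_instance_def)
  moreover have "width ws (map (\<lambda>p. p - hd P) P) = width ws P"
    using assms(1) P sorted_hd_le_last[OF strict_sorted_imp_sorted]
    by (intro width_map_minus) (auto simp: is_instance_def)
  ultimately show ?thesis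
    using min by (auto simp: is_minimal_def)
qed

lemma locally_minimal_adjacent_no_gap:
  assumes min: "is_locally_minimal tau [(a, Suc a)] x P" and "Suc a < length tau"
    and left: "\<And>k. k < a \<Longrightarrow> tau ! Suc a < tau ! k"
    and right: "\<And>k. Suc a < k \<Longrightarrow> k < length tau \<Longrightarrow> tau ! k < tau ! a"
    and pos: "P ! a < t" "t < P ! Suc a"
    and val: "x ! (P ! a) < x ! t" "x ! t < x ! (P ! Suc a)"
  shows False
proof -
  have P: "is_instance tau x P"
    using min by (simp add: is_locally_minimal_def)
  then have sorted: "sorted_wrt (<) P" and len: "length P = length tau"
    and bound: "\<forall>p\<in>set P. p < length x"
    and order: "\<forall>i<length tau. \<forall>j<length tau. x ! (P ! i) < x ! (P ! j) \<longleftrightarrow> tau ! i < tau ! j"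
    by (auto simp: is_instance_def)
  have "Suc a < length P"
    using assms(2) len by simp
  then have in_P: "P ! a \<in> set P" "P ! Suc a \<in> set P" and "P \<noteq> []"
    by auto
  have "(x ! t < x ! (P ! k) \<longleftrightarrow> x ! (P ! Suc a) < x ! (P ! k)) \<and>
        (x ! (P ! k) < x ! t \<longleftrightarrow> x ! (P ! k) < x ! (P ! Suc a))"
    if k: "k < length P" "k \<noteq> Suc a" for k
  proof -
    consider "k < a" | "k = a" | "Suc a < k"
      using k(2) by linarith
    then have "x ! (P ! Suc a) < x ! (P ! k) \<or> x ! (P ! k) \<le> x ! (P ! a)"
    proof cases
      case 1
      then show ?thesis
        using left[of k] order k(1) assms(2) len by simp
    next
      case 2
      then show ?thesis
        by simp
    next
      case 3
      then show ?thesis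
        using right[of k] order k(1) assms(2) len by (simp add: less_imp_le)
    qed
    then show ?thesis
      using val by auto
  qed
  moreover have "P ! k < t" if "k < Suc a" for k
    using sorted_wrt_nth_less[OF sorted, of k a] that pos(1) \<open>Suc a < length P\<close>
    by (cases "k = a") auto
  moreover have "t < P ! k" if "Suc a < k" "k < length P" for k
    using sorted_wrt_nth_less[OF sorted, of "Suc a" k] that pos(2) by auto
  moreover have "t < length x"
    using bound in_P pos(2) by fastforce
  ultimately have Q: "is_instance tau x (P[Suc a := t])"
    using P \<open>Suc a < length P\<close> by (intro is_instance_list_update) auto
  have "hd P \<le> t \<and> t \<le> last P"
    using sorted_hd_le_last[OF strict_sorted_imp_sorted[OF sorted]] in_P pos by fastforce
  then have "\<forall>q\<in>set (P[Suc a := t]). hd P \<le> q \<and> q \<le> last P"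
    using sorted_hd_le_last[OF strict_sorted_imp_sorted[OF sorted]] set_update_subset_insert
    by fastforce
  moreover have "is_width_system tau [(a, Suc a)]"
    using assms(2) by (simp add: is_width_system_def)
  ultimately have "(width [(a, Suc a)] (P[Suc a := t]), width [(a, Suc a)] P) \<notin> lexord {(a, b). a < b}"
    using locally_minimal_width_le min \<open>P \<noteq> []\<close> Q by blast
  moreover have "t - P ! a < P ! Suc a - P ! a"
    using pos by simp
  ultimately show False
    using \<open>Suc a < length P\<close> by (simp add: width_def)
qed

lemma bountifulI_ascent:
  assumes "\<And>N x P t j l. is_perm N x \<Longrightarrow> is_locally_minimal tau ws x P \<Longrightarrow> (j, l) \<in> ascents tau \<Longrightarrow>
             P ! j < t \<Longrightarrow> t < P ! l \<Longrightarrow> x ! (P ! j) < x ! t \<Longrightarrow> x ! t < x ! (P ! l) \<Longrightarrow> False"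
  shows "bountiful tau ws"
  unfolding bountiful_def
proof (intro allI impI)
  fix N x P t
  assume perm: "is_perm N x" and min: "is_locally_minimal tau ws x P" and "t \<notin> set P"
  show "(\<forall>j<length P. P ! j < t \<longrightarrow> x ! t < x ! (P ! j)) \<or>
        (\<forall>j<length P. t < P ! j \<longrightarrow> x ! (P ! j) < x ! t)"
  proof (rule ccontr)
    assume "\<not> ?thesis"
    then obtain j l where jl: "j < length P" "P ! j < t" "\<not> x ! t < x ! (P ! j)"
      "l < length P" "t < P ! l" "\<not> x ! (P ! l) < x ! t"
      by auto
    have "distinct x" and "is_instance tau x P"
      using perm min by (auto simp: is_perm_def is_locally_minimal_def)
    then have "(j, l) \<in> ascents tau" "x ! (P ! j) < x ! t" "x ! t < x ! (P ! l)"
      using unseparated_position_ascent[OF _ _ \<open>t \<notin> set P\<close> jl] by auto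
    then show False
      using assms[OF perm min] jl(2,5) by blast
  qed
qed

lemma bountiful_Nil_if_no_ascents: "ascents tau = {} \<Longrightarrow> bountiful tau []"
  by (rule bountifulI_ascent) auto

lemma bountiful_single_ascent:
  assumes "distinct tau" and "ascents tau = {(a, Suc a)}"
  shows "bountiful tau [(a, Suc a)]"
proof (rule bountifulI_ascent)
  fix N x P t j l
  assume min: "is_locally_minimal tau [(a, Suc a)] x P" and "(j, l) \<in> ascents tau"
    and "P ! j < t" "t < P ! l" "x ! (P ! j) < x ! t" "x ! t < x ! (P ! l)"
  moreover have "Suc a < length tau"
    using assms(2) by (auto simp: ascents_def)
  moreover have "tau ! i > tau ! k" if "i < k" "k < length tau" "(i, k) \<noteq> (a, Suc a)" for i k
  proof -
    have "tau ! i \<noteq> tau ! k"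
      using assms(1) that by (simp add: nth_eq_iff_index_eq)
    moreover have "(i, k) \<notin> ascents tau"
      using assms(2) that(3) by auto
    ultimately show ?thesis
      using that by (auto simp: ascents_def)
  qed
  ultimately show False
    using assms(2) by (intro locally_minimal_adjacent_no_gap[OF min]) auto
qed

theorem mainTheorem18:
  fixes K :: nat and sigma :: "nat list"
  assumes "is_perm K sigma"
    and "int (perm_len sigma) \<ge> int (K choose 2) - 1"
  shows "admits_bountiful sigma"
proof -
  have distinct: "distinct sigma" and len: "length sigma = K"
    using assms(1) by (auto simp: is_perm_def)
  then have unique: "p = q" if "p \<in> ascents sigma" "q \<in> ascents sigma" for p q
    using ascents_unique_if_perm_len_ge assms(2) that by blast
  show ?thesis
  proof (cases "ascents sigma = {}")
    case True
    then show ?thesis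
      unfolding admits_bountiful_def is_width_system_def
      by (intro exI[of _ "[]"]) (simp add: bountiful_Nil_if_no_ascents)
  next
    case False
    then obtain a b where "(a, b) \<in> ascents sigma"
      by auto
    then have single: "ascents sigma = {(a, b)}" and "b < K"
      using unique len by (auto simp: ascents_def)
    then have "b = Suc a"
      using ascent_adjacent distinct by blast
    then have "is_width_system sigma [(a, Suc a)]" and "bountiful sigma [(a, Suc a)]"
      using bountiful_single_ascent[OF distinct] single \<open>b < K\<close> len
      by (auto simp: is_width_system_def)
    then show ?thesis
      by (auto simp: admits_bountiful_def)
  qed
qed

end
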